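(* Let $\hat\gamma\in M_1(\rho_*,\rho^* )$, and let $\mu$ be a smooth density with $h(\mu_0;\hat\gamma)<\infty$ and $I_0(\mu)<\infty$ satisfying properties (i)-(iv). Then $\lim_{|y|\to\infty}\sup_{t\in[0,T]}|\mu(t,y)-\hat\gamma(y)|=0$.
   Context: $T>0$ fixed; $M_1$ = measurable functions $\mathbb R\to[0,1]$; for $0<\rho_*,\rho^*<1$, $M_1(\rho_*,\rho^* )$ is the set of $\gamma\in M_1$ equal to $\rho_*$ on $(-\infty,x_*]$ and $\rho^*$ on $[x^*,\infty)$ for some $x_*\le x^*$. A density is $\mu\in D([0,T];M_1)$. $I_0(\mu)=\sup_{G\in C^{1,2}_K([0,T]\times\mathbb R)}\{\int G(T,\cdot)\mu_T-\int G(0,\cdot)\mu_0-\int_0^T\int\mu(\partial_t+\frac12\partial_x^2)G-\frac12\int_0^T\int\mu(1-\mu)G_x^2\}$; $h(\mu_0;\hat\gamma)=\int[\mu_0\log(\mu_0/\hat\gamma)+(1-\mu_0)\log((1-\mu_0)/(1-\hat\gamma))]dx$. Properties (i)-(iv): (i) $\delta\le\mu\le1-\delta$ on $[0,T]\times\mathbb R$ for some $\delta\in(0,1)$; (ii) $\mu\in C^\infty([0,T]\times\mathbb R)$; (iii) $\partial_t\mu=\frac12\partial_{xx}\mu-\partial_x[H_x\mu(1-\mu)]$ with $H_x\in C^\infty_K([0,T]\times\mathbb R)$; (iv) $\|\partial_x^k\partial_t^l\mu\|_{L^\infty([0,T]\times\mathbb R)}<\infty$ for $k,l\ge1$. *)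

theory Defs
  imports "HOL-Analysis.Analysis"
begin

text \<open>Functions of (time, space) are modelled as maps real \<times> real \<Rightarrow> real, the
first component being time t, the second space x. The domain is [0,T] \<times> R.\<close>

definition dom_T :: "real \<Rightarrow> (real \<times> real) set" where
  "dom_T T = {0..T} \<times> (UNIV :: real set)"

definition px :: "(real \<times> real \<Rightarrow> real) \<Rightarrow> real \<times> real \<Rightarrow> real" where
  "px f = (\<lambda>(t, x). deriv (\<lambda>y. f (t, y)) x)"

definition pt :: "real \<Rightarrow> (real \<times> real \<Rightarrow> real) \<Rightarrow> real \<times> real \<Rightarrow> real" where
  "pt T f = (\<lambda>(t, x). vector_derivative (\<lambda>s. f (s, x)) (at t within {0..T}))"

text \<open>C-infinity on a set S of the plane: continuous, (Frechet) differentiable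
within S with partial derivatives that are again C-infinity on S.\<close>
coinductive smooth_on :: "(real \<times> real) set \<Rightarrow> (real \<times> real \<Rightarrow> real) \<Rightarrow> bool"
  for S where
  "\<lbrakk> continuous_on S f;
     \<forall>p\<in>S. (f has_derivative (\<lambda>h. fst h * g1 p + snd h * g2 p)) (at p within S);
     smooth_on S g1; smooth_on S g2 \<rbrakk> \<Longrightarrow> smooth_on S f"

definition compact_support_on :: "(real \<times> real) set \<Rightarrow> (real \<times> real \<Rightarrow> real) \<Rightarrow> bool" where
  "compact_support_on S f \<longleftrightarrow> (\<exists>K. compact K \<and> (\<forall>p\<in>S - K. f p = 0))"

definition C12K :: "real \<Rightarrow> (real \<times> real \<Rightarrow> real) \<Rightarrow> bool" where
  "C12K T G \<longleftrightarrow>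
     compact_support_on (dom_T T) G \<and> continuous_on (dom_T T) G \<and>
     (\<forall>(t, x)\<in>dom_T T.
        (\<lambda>s. G (s, x)) differentiable (at t within {0..T}) \<and>
        (\<lambda>y. G (t, y)) differentiable (at x) \<and>
        (\<lambda>y. px G (t, y)) differentiable (at x)) \<and>
     continuous_on (dom_T T) (pt T G) \<and>
     continuous_on (dom_T T) (px G) \<and>
     continuous_on (dom_T T) (px (px G))"

definition J0 :: "real \<Rightarrow> (real \<times> real \<Rightarrow> real) \<Rightarrow> (real \<times> real \<Rightarrow> real) \<Rightarrow> real" where
  "J0 T \<mu> G =
     (\<integral>x. G (T, x) * \<mu> (T, x) \<partial>lborel)
   - (\<integral>x. G (0, x) * \<mu> (0, x) \<partial>lborel)
   - (LINT p : dom_T T | lborel. \<mu> p * (pt T G p + 1/2 * px (px G) p))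
   - 1/2 * (LINT p : dom_T T | lborel. \<mu> p * (1 - \<mu> p) * (px G p)\<^sup>2)"

definition I0 :: "real \<Rightarrow> (real \<times> real \<Rightarrow> real) \<Rightarrow> ereal" where
  "I0 T \<mu> = (SUP G \<in> {G. C12K T G}. ereal (J0 T \<mu> G))"

definition xlogxy :: "real \<Rightarrow> real \<Rightarrow> ereal" where
  "xlogxy a b = (if a = 0 then 0 else if b = 0 then \<infinity> else ereal (a * ln (a / b)))"

definition bern_ent :: "real \<Rightarrow> real \<Rightarrow> ereal" where
  "bern_ent a b = xlogxy a b + xlogxy (1 - a) (1 - b)"

definition rel_entropy :: "(real \<Rightarrow> real) \<Rightarrow> (real \<Rightarrow> real) \<Rightarrow> ennreal" where
  "rel_entropy m0 \<gamma> = (\<integral>\<^sup>+ x. e2ennreal (bern_ent (m0 x) (\<gamma> x)) \<partial>lebesgue)"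

definition M1 :: "(real \<Rightarrow> real) set" where
  "M1 = {\<gamma>. \<gamma> \<in> borel_measurable lebesgue \<and> (\<forall>x. 0 \<le> \<gamma> x \<and> \<gamma> x \<le> 1)}"

definition M1_prof :: "real \<Rightarrow> real \<Rightarrow> (real \<Rightarrow> real) set" where
  "M1_prof rl rr = {\<gamma> \<in> M1. \<exists>xl xr. xl \<le> xr \<and>
       (\<forall>x. x \<le> xl \<longrightarrow> \<gamma> x = rl) \<and> (\<forall>x. xr \<le> x \<longrightarrow> \<gamma> x = rr)}"

end

theory Submission
  imports Defs
begin

(* Outside the compact support of H_x the equation (iii) is the heat equation
   mu_t = mu_xx/2, and (iv) then bounds mu_xxx = 2 (mu_t)_x there.  The proof has two steps.

   Initial time: by Taylor's formula mu(0,.) has a bounded gradient far out, hence is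
   Lipschitz there.  Since the Bernoulli relative entropy density is at least (a-b)^2/4,
   finite entropy h(mu_0; gamma) rules out |mu(0,x) - gamma(x)| > eps on infinitely many
   disjoint intervals of a fixed length, so mu(0,.) - gamma vanishes at infinity.

   Propagation: gamma is constant on each half-line far out.  At a far point y the weak
   maximum principle on [0,T] x [y-L, y+L] with an explicit exponential barrier bounds
   |mu(t,y) - gamma(y)| by its initial size on the window plus 2 e^{T/2} e^{-L}. *)

lemma smooth_on_elim:
  assumes "smooth_on S f"
  shows "\<exists>g1 g2. continuous_on S f \<and>
     (\<forall>p\<in>S. (f has_derivative (\<lambda>h. fst h * g1 p + snd h * g2 p)) (at p within S)) \<and>
     smooth_on S g1 \<and> smooth_on S g2"
  using assms by (cases rule: smooth_on.cases) blast

lemma smooth_on_continuous: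
  assumes "smooth_on S f"
  shows "continuous_on S f"
  using smooth_on_elim[OF assms] by blast

lemma smooth_on_cong:
  assumes g: "smooth_on S g" and eq: "\<And>p. p \<in> S \<Longrightarrow> f p = g p"
  shows "smooth_on S f"
proof -
  obtain g1 g2 where cont: "continuous_on S g"
    and d: "\<forall>p\<in>S. (g has_derivative (\<lambda>h. fst h * g1 p + snd h * g2 p)) (at p within S)"
    and s1: "smooth_on S g1" and s2: "smooth_on S g2"
    using smooth_on_elim[OF g] by blast
  show ?thesis
  proof (rule smooth_on.intros[OF _ _ s1 s2])
    show "continuous_on S f"
      by (rule continuous_on_eq[OF cont]) (simp add: eq)
    show "\<forall>p\<in>S. (f has_derivative (\<lambda>h. fst h * g1 p + snd h * g2 p)) (at p within S)"
    proof
      fix p assume p: "p \<in> S"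
      show "(f has_derivative (\<lambda>h. fst h * g1 p + snd h * g2 p)) (at p within S)"
        by (rule has_derivative_transform_within[OF d[rule_format, OF p] zero_less_one p])
          (simp add: eq)
    qed
  qed
qed

lemma smooth_on_space_derivative:
  assumes "smooth_on (dom_T T) f"
  obtains g where "smooth_on (dom_T T) g"
    "\<And>t x. t \<in> {0..T} \<Longrightarrow> ((\<lambda>y. f (t, y)) has_real_derivative g (t, x)) (at x)"
proof -
  obtain g1 g2 where
    d: "\<forall>p\<in>dom_T T. (f has_derivative (\<lambda>h. fst h * g1 p + snd h * g2 p)) (at p within dom_T T)"
    and s: "smooth_on (dom_T T) g2"
    using smooth_on_elim[OF assms] by blast
  have "((\<lambda>y. f (t, y)) has_real_derivative g2 (t, x)) (at x)" if t: "t \<in> {0..T}" for t x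
  proof -
    have line: "((\<lambda>y. (t, y)) has_derivative (\<lambda>h. (0, h))) (at x)"
      by (auto intro!: derivative_eq_intros)
    have "range (\<lambda>y. (t, y)) \<subseteq> dom_T T" and "(t, x) \<in> dom_T T"
      using t by (auto simp: dom_T_def)
    then have "(f has_derivative (\<lambda>h. fst h * g1 (t, x) + snd h * g2 (t, x)))
        (at (t, x) within range (\<lambda>y. (t, y)))"
      using d by (blast intro: has_derivative_subset)
    from diff_chain_within[OF line this] show ?thesis
      by (simp add: has_field_derivative_def o_def mult.commute[of _ "g2 (t, x)"])
  qed
  with s show ?thesis using that by blast
qed

lemma has_px_derivative:
  assumes "smooth_on (dom_T T) f" "t \<in> {0..T}"
  shows "((\<lambda>y. f (t, y)) has_real_derivative px f (t, x)) (at x)"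
proof -
  obtain g where "\<And>t x. t \<in> {0..T} \<Longrightarrow> ((\<lambda>y. f (t, y)) has_real_derivative g (t, x)) (at x)"
    using assms(1) by (rule smooth_on_space_derivative) blast
  then have d: "((\<lambda>y. f (t, y)) has_real_derivative g (t, x)) (at x)" using assms(2) .
  then show ?thesis by (simp add: px_def DERIV_imp_deriv[OF d])
qed

lemma smooth_on_px:
  assumes "smooth_on (dom_T T) f"
  shows "smooth_on (dom_T T) (px f)"
proof -
  obtain g where g: "smooth_on (dom_T T) g"
    and d: "\<And>t x. t \<in> {0..T} \<Longrightarrow> ((\<lambda>y. f (t, y)) has_real_derivative g (t, x)) (at x)"
    using assms by (rule smooth_on_space_derivative) blast
  have eq: "px f (t, x) = g (t, x)" if "t \<in> {0..T}" for t x
    by (simp add: px_def DERIV_imp_deriv[OF d[OF that]])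
  show ?thesis
    by (rule smooth_on_cong[OF g]) (auto simp: dom_T_def eq)
qed

lemma has_pt_derivative:
  assumes T: "0 < T" and f: "smooth_on (dom_T T) f" and t: "t \<in> {0..T}"
  shows "((\<lambda>s. f (s, x)) has_real_derivative pt T f (t, x)) (at t within {0..T})"
proof -
  obtain g1 g2 where
    d: "\<forall>p\<in>dom_T T. (f has_derivative (\<lambda>h. fst h * g1 p + snd h * g2 p)) (at p within dom_T T)"
    using smooth_on_elim[OF f] by blast
  have line: "((\<lambda>s. (s, x)) has_derivative (\<lambda>h. (h, 0))) (at t within {0..T})"
    by (auto intro!: derivative_eq_intros)
  have "(\<lambda>s. (s, x)) ` {0..T} \<subseteq> dom_T T" and "(t, x) \<in> dom_T T"
    using t by (auto simp: dom_T_def)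
  then have "(f has_derivative (\<lambda>h. fst h * g1 (t, x) + snd h * g2 (t, x)))
      (at (t, x) within (\<lambda>s. (s, x)) ` {0..T})"
    using d by (blast intro: has_derivative_subset)
  from diff_chain_within[OF line this]
  have deriv: "((\<lambda>s. f (s, x)) has_real_derivative g1 (t, x)) (at t within {0..T})"
    by (simp add: has_field_derivative_def o_def mult.commute[of _ "g1 (t, x)"])
  then have "pt T f (t, x) = g1 (t, x)"
    unfolding pt_def using vector_derivative_within_closed_interval[OF T t]
    by (simp add: has_real_derivative_iff_has_vector_derivative)
  with deriv show ?thesis by simp
qed

lemma second_derivative_at_max_nonpos:
  fixes f f' :: "real \<Rightarrow> real"
  assumes ab: "a < x0" "x0 < b"
    and d1: "\<And>x. a < x \<Longrightarrow> x < b \<Longrightarrow> (f has_real_derivative f' x) (at x)"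
    and d2: "(f' has_real_derivative f2) (at x0)"
    and mx: "\<And>y. a < y \<Longrightarrow> y < b \<Longrightarrow> f y \<le> f x0"
  shows "f2 \<le> 0"
proof (rule ccontr)
  assume "\<not> f2 \<le> 0" hence pos: "0 < f2" by simp
  have "f' x0 = 0"
  proof (rule DERIV_local_max[OF d1[OF ab]])
    show "0 < min (x0 - a) (b - x0)" using ab by simp
    show "\<forall>y. \<bar>x0 - y\<bar> < min (x0 - a) (b - x0) \<longrightarrow> f y \<le> f x0"
      using mx by (auto simp: abs_if split: if_splits)
  qed
  from DERIV_pos_inc_right[OF d2 pos] obtain d where d: "d > 0"
    and inc: "\<And>h. h > 0 \<Longrightarrow> h < d \<Longrightarrow> f' x0 < f' (x0 + h)" by blast
  define h where "h = min d (b - x0) / 2"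
  have h: "0 < h" "h < d" "x0 + h < b" using d ab by (auto simp: h_def min_def field_simps)
  obtain z where z: "x0 < z" "z < x0 + h" "f (x0+h) - f x0 = (x0 + h - x0) * f' z"
    using MVT2[of x0 "x0+h" f f'] h ab d1 by force
  have "f' z > 0" using inc[of "z - x0"] z h \<open>f' x0 = 0\<close> by auto
  hence "f (x0+h) > f x0" using z h by (simp add: algebra_simps)
  moreover have "f (x0 + h) \<le> f x0" using mx h ab by auto
  ultimately show False by simp
qed

lemma left_derivative_at_max_nonneg:
  fixes g :: "real \<Rightarrow> real"
  assumes d: "(g has_real_derivative D) (at t0 within {0..T})"
    and t0: "0 < t0" "t0 \<le> T"
    and mx: "\<And>s. 0 \<le> s \<Longrightarrow> s \<le> t0 \<Longrightarrow> g s \<le> g t0"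
  shows "0 \<le> D"
proof -
  have "(g has_real_derivative D) (at t0 within {0..t0})"
    using d t0 by (auto intro: DERIV_subset)
  hence "(g has_real_derivative D) (at_left t0)"
    using at_within_Icc_at_left[OF t0(1)] by simp
  hence lim: "((\<lambda>s. (g s - g t0) / (s - t0)) \<longlongrightarrow> D) (at_left t0)"
    by (simp add: has_field_derivative_iff)
  show ?thesis
  proof (rule tendsto_lowerbound[OF lim])
    show "at_left t0 \<noteq> bot" by simp
    show "\<forall>\<^sub>F s in at_left t0. 0 \<le> (g s - g t0) / (s - t0)"
      using eventually_at_left_real[OF t0(1)]
    proof (rule eventually_mono)
      fix s assume "s \<in> {0<..<t0}"
      hence "g s - g t0 \<le> 0" "s - t0 < 0" using mx by auto
      thus "0 \<le> (g s - g t0) / (s - t0)" by (simp add: divide_nonpos_neg)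
    qed
  qed
qed

(* The
   classical proof perturbs u by -\<eta> t to make the inequality strict. *)

lemma weak_maximum_principle:
  fixes u ut ux uxx :: "real \<times> real \<Rightarrow> real"
  assumes T: "0 < T" and ab: "a < b"
    and cont: "continuous_on ({0..T} \<times> {a..b}) u"
    and dt: "\<And>t x. t\<in>{0..T} \<Longrightarrow> x\<in>{a..b} \<Longrightarrow> ((\<lambda>s. u (s,x)) has_real_derivative ut (t,x)) (at t within {0..T})"
    and dx: "\<And>t x. t\<in>{0..T} \<Longrightarrow> x\<in>{a<..<b} \<Longrightarrow> ((\<lambda>y. u (t,y)) has_real_derivative ux (t,x)) (at x)"
    and dxx: "\<And>t x. t\<in>{0..T} \<Longrightarrow> x\<in>{a<..<b} \<Longrightarrow> ((\<lambda>y. ux (t,y)) has_real_derivative uxx (t,x)) (at x)"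
    and pde: "\<And>t x. t\<in>{0..T} \<Longrightarrow> x\<in>{a<..<b} \<Longrightarrow> ut (t,x) \<le> uxx (t,x) / 2"
    and bd0: "\<And>x. x\<in>{a..b} \<Longrightarrow> u (0,x) \<le> 0"
    and bda: "\<And>t. t\<in>{0..T} \<Longrightarrow> u (t,a) \<le> 0"
    and bdb: "\<And>t. t\<in>{0..T} \<Longrightarrow> u (t,b) \<le> 0"
    and t1: "t1 \<in> {0..T}" and x1: "x1 \<in> {a..b}"
  shows "u (t1,x1) \<le> 0"
proof (rule ccontr)
  assume "\<not> u (t1,x1) \<le> 0" hence pos: "u (t1,x1) > 0" by simp
  define \<eta> where "\<eta> = u (t1,x1) / (2 * (T + 1))"
  have eta: "\<eta> > 0" using pos T by (simp add: \<eta>_def)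
  have etat1: "\<eta> * t1 \<le> u (t1,x1) / 2"
  proof -
    have "\<eta> * t1 \<le> \<eta> * (T+1)" using t1 eta by (intro mult_left_mono) auto
    also have "\<dots> = u (t1,x1) / 2" using T by (simp add: \<eta>_def field_simps)
    finally show ?thesis .
  qed
  define v where "v = (\<lambda>p. u p - \<eta> * fst p)"
  have K: "compact ({0..T} \<times> {a..b})" by (intro compact_Times) auto
  have cv: "continuous_on ({0..T} \<times> {a..b}) v"
    unfolding v_def by (intro continuous_intros cont)
  obtain p0 where p0: "p0 \<in> {0..T} \<times> {a..b}" and pmax: "\<And>p. p \<in> {0..T} \<times> {a..b} \<Longrightarrow> v p \<le> v p0"
    using continuous_attains_sup[OF K _ cv] T ab by fastforce
  obtain t0 x0 where p0e: "p0 = (t0,x0)" by (cases p0)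
  have "v (t1,x1) \<le> v (t0,x0)" using pmax t1 x1 p0e by auto
  hence vpos: "v (t0,x0) > 0" using pos etat1 by (simp add: v_def)
  have t0: "0 \<le> t0" "t0 \<le> T" and x0: "a \<le> x0" "x0 \<le> b" using p0 p0e by auto
  have "t0 \<noteq> 0" using vpos bd0[of x0] x0 by (auto simp: v_def)
  hence t0p: "0 < t0" using t0 by simp
  have et0: "0 \<le> \<eta> * t0" using eta t0 by simp
  have "x0 \<noteq> a" using vpos bda[of t0] t0 et0 by (auto simp: v_def)
  moreover have "x0 \<noteq> b" using vpos bdb[of t0] t0 et0 by (auto simp: v_def)
  ultimately have x0i: "a < x0" "x0 < b" using x0 by auto
  have "uxx (t0,x0) \<le> 0"
  proof (rule second_derivative_at_max_nonpos[of a x0 b "\<lambda>y. u (t0,y)" "\<lambda>y. ux (t0,y)"])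
    show "a < x0" "x0 < b" by fact+
    show "\<And>x. a < x \<Longrightarrow> x < b \<Longrightarrow> ((\<lambda>y. u (t0, y)) has_real_derivative ux (t0, x)) (at x)"
      using dx t0 by auto
    show "((\<lambda>y. ux (t0, y)) has_real_derivative uxx (t0, x0)) (at x0)" using dxx t0 x0i by auto
    show "\<And>y. a < y \<Longrightarrow> y < b \<Longrightarrow> u (t0, y) \<le> u (t0, x0)"
    proof -
      fix y assume "a < y" "y < b"
      hence "v (t0,y) \<le> v (t0,x0)" using pmax[of "(t0,y)"] t0 p0e by auto
      thus "u (t0, y) \<le> u (t0, x0)" by (simp add: v_def)
    qed
  qed
  moreover have "0 \<le> ut (t0,x0) - \<eta>"
  proof (rule left_derivative_at_max_nonneg[of "\<lambda>s. u (s,x0) - \<eta> * s" _ t0 T])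
    show "((\<lambda>s. u (s, x0) - \<eta> * s) has_real_derivative ut (t0, x0) - \<eta>) (at t0 within {0..T})"
      using dt[of t0 x0] t0 x0 by (auto intro!: derivative_eq_intros)
    show "0 < t0" "t0 \<le> T" by fact+
    show "\<And>s. 0 \<le> s \<Longrightarrow> s \<le> t0 \<Longrightarrow> u (s, x0) - \<eta> * s \<le> u (t0, x0) - \<eta> * t0"
    proof -
      fix s assume "0 \<le> s" "s \<le> t0"
      hence "v (s,x0) \<le> v (t0,x0)" using pmax[of "(s,x0)"] t0 x0 p0e by auto
      thus "u (s, x0) - \<eta> * s \<le> u (t0, x0) - \<eta> * t0" by (simp add: v_def)
    qed
  qed
  moreover have "ut (t0,x0) \<le> uxx (t0,x0) / 2" using pde t0 x0i by auto
  ultimately show False using eta by simp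
qed

(* Apply the maximum principle to
   w - e - \<phi> with the exact solution \<phi>(t,x) = e^{t/2} (e^{x-y} + e^{y-x}) / e^L, which is
   at least 1 on the lateral boundary x = y +- L. *)

lemma heat_barrier_estimate:
  fixes w wt wx wxx :: "real \<times> real \<Rightarrow> real"
  assumes T: "0 < T" and L: "0 < L"
    and cont: "continuous_on ({0..T} \<times> {y-L..y+L}) w"
    and dt: "\<And>t x. t\<in>{0..T} \<Longrightarrow> x\<in>{y-L..y+L} \<Longrightarrow> ((\<lambda>s. w (s,x)) has_real_derivative wt (t,x)) (at t within {0..T})"
    and dx: "\<And>t x. t\<in>{0..T} \<Longrightarrow> x\<in>{y-L<..<y+L} \<Longrightarrow> ((\<lambda>z. w (t,z)) has_real_derivative wx (t,x)) (at x)"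
    and dxx: "\<And>t x. t\<in>{0..T} \<Longrightarrow> x\<in>{y-L<..<y+L} \<Longrightarrow> ((\<lambda>z. wx (t,z)) has_real_derivative wxx (t,x)) (at x)"
    and pde: "\<And>t x. t\<in>{0..T} \<Longrightarrow> x\<in>{y-L<..<y+L} \<Longrightarrow> wt (t,x) = wxx (t,x) / 2"
    and bd: "\<And>t x. t\<in>{0..T} \<Longrightarrow> x\<in>{y-L..y+L} \<Longrightarrow> w (t,x) \<le> 1"
    and init: "\<And>x. x\<in>{y-L..y+L} \<Longrightarrow> w (0,x) \<le> e"
    and e: "0 \<le> e"
    and t1: "t1 \<in> {0..T}"
  shows "w (t1,y) \<le> e + 2 * exp (T/2) / exp L"
proof -
  define \<phi> where "\<phi> = (\<lambda>(t,x). exp (t/2) * (exp (x-y) + exp (y-x)) / exp L)"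
  define u where "u = (\<lambda>p. w p - e - \<phi> p)"
  have phipos: "\<phi> p > 0" for p by (auto simp: \<phi>_def split: prod.splits intro!: divide_pos_pos mult_pos_pos add_pos_pos)
  have "u (t1,y) \<le> 0"
  proof (rule weak_maximum_principle[where ut = "\<lambda>p. wt p - \<phi> p / 2" and ux = "\<lambda>p. wx p - exp (fst p/2) * (exp (snd p - y) - exp (y - snd p)) / exp L"
        and uxx = "\<lambda>p. wxx p - \<phi> p" and a = "y - L" and b = "y + L" and T = T])
    show "0 < T" by fact
    show "y - L < y + L" using L by simp
    show "continuous_on ({0..T} \<times> {y - L..y + L}) u"
      unfolding u_def \<phi>_def by (auto simp: case_prod_unfold intro!: continuous_intros cont)
    show "((\<lambda>s. u (s, x)) has_real_derivative wt (t, x) - \<phi> (t, x) / 2) (at t within {0..T})"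
      if "t \<in> {0..T}" "x \<in> {y - L..y + L}" for t x
      unfolding u_def \<phi>_def using dt[OF that]
      by (auto intro!: derivative_eq_intros simp: field_simps)
    show "((\<lambda>z. u (t, z)) has_real_derivative wx (t,x) - exp (fst (t,x)/2) * (exp (snd (t,x) - y) - exp (y - snd (t,x))) / exp L) (at x)"
      if "t \<in> {0..T}" "x \<in> {y - L<..<y + L}" for t x
      unfolding u_def \<phi>_def using dx[OF that]
      by (auto intro!: derivative_eq_intros simp: field_simps)
    show "((\<lambda>z. wx (t,z) - exp (fst (t,z)/2) * (exp (snd (t,z) - y) - exp (y - snd (t,z))) / exp L) has_real_derivative wxx (t, x) - \<phi> (t, x)) (at x)"
      if "t \<in> {0..T}" "x \<in> {y - L<..<y + L}" for t x
      unfolding \<phi>_def using dxx[OF that]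
      by (auto intro!: derivative_eq_intros simp: field_simps)
    show "wt (t, x) - \<phi> (t, x) / 2 \<le> (wxx (t, x) - \<phi> (t, x)) / 2"
      if "t \<in> {0..T}" "x \<in> {y - L<..<y + L}" for t x
      using pde[OF that] by simp
    show "u (0, x) \<le> 0" if "x \<in> {y - L..y + L}" for x
      using init[OF that] phipos[of "(0,x)"] by (simp add: u_def)
    have phib: "\<phi> (t, y - L) \<ge> 1" "\<phi> (t, y + L) \<ge> 1" if "t \<in> {0..T}" for t
    proof -
      have e1: "1 \<le> exp (t/2)" using that by simp
      have "exp L \<le> exp L + exp (-L)" by simp
      also have "\<dots> \<le> exp (t/2) * (exp L + exp (-L))"
        using mult_right_mono[OF e1, of "exp L + exp (-L)"] by simp
      finally have "exp L \<le> exp (t/2) * (exp L + exp (-L))" .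
      thus "\<phi> (t, y - L) \<ge> 1" "\<phi> (t, y + L) \<ge> 1"
        by (auto simp: \<phi>_def field_simps add.commute)
    qed
    show "u (t, y - L) \<le> 0" if "t \<in> {0..T}" for t
      using phib[OF that] bd[OF that, of "y-L"] e L by (simp add: u_def)
    show "u (t, y + L) \<le> 0" if "t \<in> {0..T}" for t
      using phib[OF that] bd[OF that, of "y+L"] e L by (simp add: u_def)
    show "t1 \<in> {0..T}" by fact
    show "y \<in> {y - L..y + L}" using L by simp
  qed
  moreover have "\<phi> (t1,y) \<le> 2 * exp (T/2) / exp L"
    using t1 by (auto simp: \<phi>_def divide_right_mono)
  ultimately show ?thesis by (simp add: u_def)
qed

lemma heat_barrier_estimate_abs:
  fixes w wt wx wxx :: "real \<times> real \<Rightarrow> real"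
  assumes T: "0 < T" and L: "0 < L"
    and cont: "continuous_on ({0..T} \<times> {y-L..y+L}) w"
    and dt: "\<And>t x. t\<in>{0..T} \<Longrightarrow> x\<in>{y-L..y+L} \<Longrightarrow> ((\<lambda>s. w (s,x)) has_real_derivative wt (t,x)) (at t within {0..T})"
    and dx: "\<And>t x. t\<in>{0..T} \<Longrightarrow> x\<in>{y-L<..<y+L} \<Longrightarrow> ((\<lambda>z. w (t,z)) has_real_derivative wx (t,x)) (at x)"
    and dxx: "\<And>t x. t\<in>{0..T} \<Longrightarrow> x\<in>{y-L<..<y+L} \<Longrightarrow> ((\<lambda>z. wx (t,z)) has_real_derivative wxx (t,x)) (at x)"
    and pde: "\<And>t x. t\<in>{0..T} \<Longrightarrow> x\<in>{y-L<..<y+L} \<Longrightarrow> wt (t,x) = wxx (t,x) / 2"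
    and bd: "\<And>t x. t\<in>{0..T} \<Longrightarrow> x\<in>{y-L..y+L} \<Longrightarrow> \<bar>w (t,x)\<bar> \<le> 1"
    and init: "\<And>x. x\<in>{y-L..y+L} \<Longrightarrow> \<bar>w (0,x)\<bar> \<le> e"
    and t1: "t1 \<in> {0..T}"
  shows "\<bar>w (t1,y)\<bar> \<le> e + 2 * exp (T/2) / exp L"
proof -
  have e: "0 \<le> e" using init[of y] L by simp
  have "w (t1,y) \<le> e + 2 * exp (T/2) / exp L"
    by (rule heat_barrier_estimate[OF T L cont dt dx dxx pde _ _ e t1])
      (use bd init in \<open>auto simp: abs_le_iff\<close>)
  moreover have "- w (t1,y) \<le> e + 2 * exp (T/2) / exp L"
  proof (rule heat_barrier_estimate[where w = "\<lambda>p. - w p" and wt = "\<lambda>p. - wt p"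
        and wx = "\<lambda>p. - wx p" and wxx = "\<lambda>p. - wxx p", OF T L _ _ _ _ _ _ _ e t1])
    show "continuous_on ({0..T} \<times> {y-L..y+L}) (\<lambda>p. - w p)"
      using cont by (intro continuous_intros)
  qed (use dt dx dxx pde bd init in \<open>auto intro: DERIV_minus simp: abs_le_iff\<close>)
  ultimately show ?thesis by (simp add: abs_le_iff)
qed

(* Pinsker-type lower bound for the Bernoulli relative entropy:
   a log(a/b) + (1-a) log((1-a)/(1-b)) \<ge> (a-b)^2/4, via p log(p/q) \<ge> 2p - 2 sqrt(pq). *)

lemma mult_ln_ratio_lower:
  fixes p q :: real
  assumes "0 < p" "0 < q"
  shows "2*p - 2 * sqrt (p*q) \<le> p * ln (p/q)"
proof -
  have s: "0 < sqrt (q/p)" using assms by simp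
  have "ln (sqrt (q/p)) \<le> sqrt (q/p) - 1" using ln_le_minus_one[OF s] .
  moreover have "ln (sqrt (q/p)) = - ln (p/q) / 2"
    using assms by (simp add: ln_sqrt ln_div)
  ultimately have "- ln (p/q) \<le> 2 * sqrt (q/p) - 2" by simp
  hence "p * (- ln (p/q)) \<le> p * (2 * sqrt (q/p) - 2)" using assms by (intro mult_left_mono) auto
  moreover have "p * sqrt (q/p) = sqrt (p*q)"
  proof -
    have "p*q = p^2 * (q/p)" using assms by (simp add: power2_eq_square)
    hence "sqrt (p*q) = sqrt (p^2) * sqrt (q/p)" by (simp only: real_sqrt_mult)
    also have "\<dots> = p * sqrt (q/p)" using assms by simp
    finally show ?thesis by simp
  qed
  ultimately show ?thesis by (simp add: algebra_simps)
qed

lemma bernoulli_entropy_quadratic_lower: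
  fixes a b :: real
  assumes "0 < a" "a < 1" "0 < b" "b < 1"
  shows "(a-b)^2/4 \<le> a * ln (a/b) + (1-a) * ln ((1-a)/(1-b))"
proof -
  have h1: "2*a - 2 * sqrt (a*b) \<le> a * ln (a/b)" using mult_ln_ratio_lower assms by simp
  have h2: "2*(1-a) - 2 * sqrt ((1-a)*(1-b)) \<le> (1-a) * ln ((1-a)/(1-b))" using mult_ln_ratio_lower[of "1-a" "1-b"] assms by simp
  have sq: "2*a - 2 * sqrt (a*b) + (2*(1-a) - 2 * sqrt ((1-a)*(1-b)))
     = (sqrt a - sqrt b)^2 + (sqrt (1-a) - sqrt (1-b))^2"
  proof -
    have "sqrt (a*b) = sqrt a * sqrt b" "sqrt ((1-a)*(1-b)) = sqrt (1-a) * sqrt (1-b)"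
      by (simp_all only: real_sqrt_mult)
    moreover have "(sqrt a)^2 = a" "(sqrt b)^2 = b" "(sqrt (1-a))^2 = 1-a" "(sqrt (1-b))^2 = 1-b"
      using assms by auto
    ultimately show ?thesis by (simp add: power2_diff algebra_simps)
  qed
  have "(a-b)^2 = (sqrt a - sqrt b)^2 * (sqrt a + sqrt b)^2"
  proof -
    have "a - b = (sqrt a - sqrt b) * (sqrt a + sqrt b)" using assms
      by (simp add: algebra_simps)
    thus ?thesis by (simp add: power_mult_distrib)
  qed
  moreover have "(sqrt a + sqrt b)^2 \<le> 4"
  proof -
    have "sqrt a \<le> 1" "sqrt b \<le> 1" using assms by auto
    hence "sqrt a + sqrt b \<le> 2" by linarith
    hence "(sqrt a + sqrt b)^2 \<le> 2^2" using assms by (intro power_mono) auto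
    thus ?thesis by simp
  qed
  ultimately have "(a-b)^2 \<le> (sqrt a - sqrt b)^2 * 4"
    using mult_left_mono[of "(sqrt a + sqrt b)^2" 4 "(sqrt a - sqrt b)^2"] by simp
  hence "(a-b)^2/4 \<le> (sqrt a - sqrt b)^2" by simp
  moreover have "0 \<le> (sqrt (1-a) - sqrt (1-b))^2" by simp
  ultimately show ?thesis using h1 h2 sq by linarith
qed

lemma bern_ent_lower:
  assumes "0 < a" "a < 1" "0 < b" "b < 1"
  shows "ennreal ((a-b)^2/4) \<le> e2ennreal (bern_ent a b)"
proof -
  have "bern_ent a b = ereal (a * ln (a/b) + (1-a) * ln ((1-a)/(1-b)))"
    using assms by (simp add: bern_ent_def xlogxy_def)
  thus ?thesis using bernoulli_entropy_quadratic_lower[OF assms] by (simp add: e2ennreal_ereal ennreal_leI)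
qed

lemma separated_far_sequence:
  fixes P :: "real \<Rightarrow> bool"
  assumes unb: "\<And>R. \<exists>x. R \<le> \<bar>x\<bar> \<and> P x"
  shows "\<exists>p :: nat \<Rightarrow> real.
    (\<forall>k. P (p k) \<and> R \<le> \<bar>p k\<bar>) \<and> (\<forall>j k. j \<noteq> k \<longrightarrow> d \<le> \<bar>p j - p k\<bar>)"
proof -
  obtain sel where sel: "\<And>R. R \<le> \<bar>sel R\<bar> \<and> P (sel R)" using unb by metis
  define p where "p = rec_nat (sel \<bar>R\<bar>) (\<lambda>_ q. sel (\<bar>q\<bar> + \<bar>d\<bar> + \<bar>R\<bar>))"
  have p0: "p 0 = sel \<bar>R\<bar>" and pS: "\<And>k. p (Suc k) = sel (\<bar>p k\<bar> + \<bar>d\<bar> + \<bar>R\<bar>)"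
    by (simp_all add: p_def)
  have good: "P (p k) \<and> R \<le> \<bar>p k\<bar>" for k
  proof (cases k)
    case 0
    then show ?thesis using sel[of "\<bar>R\<bar>"] p0 by auto
  next
    case (Suc j)
    have "\<bar>p j\<bar> + \<bar>d\<bar> + \<bar>R\<bar> \<le> \<bar>p k\<bar>" "P (p k)"
      using Suc sel[of "\<bar>p j\<bar> + \<bar>d\<bar> + \<bar>R\<bar>"] pS[of j] by auto
    then show ?thesis
      using abs_ge_zero[of "p j"] abs_ge_zero[of d] abs_ge_self[of R] by linarith
  qed
  have step: "\<bar>p k\<bar> + \<bar>d\<bar> \<le> \<bar>p (Suc k)\<bar>" for k
  proof -
    have "\<bar>p k\<bar> + \<bar>d\<bar> + \<bar>R\<bar> \<le> \<bar>p (Suc k)\<bar>"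
      using sel[of "\<bar>p k\<bar> + \<bar>d\<bar> + \<bar>R\<bar>"] pS[of k] by simp
    then show ?thesis using abs_ge_zero[of R] by linarith
  qed
  have grow: "\<bar>p j\<bar> + \<bar>d\<bar> \<le> \<bar>p k\<bar>" if "j < k" for j k
    using that
  proof (induction k)
    case (Suc k)
    show ?case
    proof (cases "j = k")
      case True
      then show ?thesis using step[of k] by simp
    next
      case False
      then have "j < k" using Suc.prems by simp
      then show ?thesis using Suc.IH step[of k] abs_ge_zero[of d] by linarith
    qed
  qed simp
  have sep: "d \<le> \<bar>p j - p k\<bar>" if "j \<noteq> k" for j k
    using that grow[of j k] grow[of k j] abs_ge_self[of d]
      abs_triangle_ineq2[of "p j" "p k"] abs_triangle_ineq2[of "p k" "p j"] abs_minus_commute[of "p j" "p k"]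
    by (cases "j < k") linarith+
  show ?thesis
    by (rule exI[of _ p]) (use good sep in blast)
qed

lemma nn_integral_disjoint_bumps_infinite:
  fixes f :: "real \<Rightarrow> ennreal" and p :: "nat \<Rightarrow> real"
  assumes c: "0 < c" and r: "0 < r"
    and sep: "\<And>j k. j \<noteq> k \<Longrightarrow> 2 * r < \<bar>p j - p k\<bar>"
    and bump: "\<And>k z. z \<in> {p k - r..p k + r} \<Longrightarrow> ennreal c \<le> f z"
  shows "(\<integral>\<^sup>+ x. f x \<partial>lebesgue) = \<infinity>"
proof (rule ccontr)
  define I where "I = (\<lambda>k. {p k - r..p k + r})"
  define G where "G = (\<lambda>N x. \<Sum>k<N. ennreal c * indicator (I k) x)"
  have disj: "z \<notin> I k" if "j \<noteq> k" "z \<in> I j" for j k z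
    using sep[OF that(1)] that(2) by (auto simp: I_def)
  have G_le: "G N z \<le> f z" for N z
  proof (cases "\<exists>k0<N. z \<in> I k0")
    case True
    then obtain k0 where k0: "k0 < N" "z \<in> I k0" by blast
    have "G N z = ennreal c * indicator (I k0) z + (\<Sum>k\<in>{..<N} - {k0}. ennreal c * indicator (I k) z)"
      unfolding G_def using k0 by (subst sum.remove[of _ k0]) auto
    also have "(\<Sum>k\<in>{..<N} - {k0}. ennreal c * indicator (I k) z) = 0"
      using disj[of k0 _ z] k0 by (intro sum.neutral) auto
    finally show ?thesis using k0 bump by (simp add: I_def)
  next
    case False
    then show ?thesis unfolding G_def by (simp add: sum.neutral)
  qed
  have G_integral: "(\<integral>\<^sup>+ x. G N x \<partial>lebesgue) = ennreal (real N * c * (2 * r))" for N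
  proof -
    have "(\<integral>\<^sup>+ x. G N x \<partial>lebesgue) = (\<integral>\<^sup>+ x. G N x \<partial>lborel)"
      by (rule nn_integral_completion)
    also have "\<dots> = (\<Sum>k<N. \<integral>\<^sup>+ x. ennreal c * indicator (I k) x \<partial>lborel)"
      unfolding G_def by (rule nn_integral_sum) (auto simp: I_def)
    also have "\<dots> = (\<Sum>k<N. ennreal c * ennreal (2 * r))"
      using r by (simp add: nn_integral_cmult_indicator I_def emeasure_lborel_Icc)
    also have "\<dots> = ennreal (real N * c * (2 * r))"
      using c r by (simp add: ennreal_mult[symmetric] ennreal_of_nat_eq_real_of_nat)
    finally show ?thesis .
  qed
  assume "(\<integral>\<^sup>+ x. f x \<partial>lebesgue) \<noteq> \<infinity>"
  then obtain v where v: "(\<integral>\<^sup>+ x. f x \<partial>lebesgue) = ennreal v" "0 \<le> v"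
    by (cases "\<integral>\<^sup>+ x. f x \<partial>lebesgue") auto
  obtain N :: nat where N: "v / (c * (2 * r)) < real N" using reals_Archimedean2 by blast
  have "ennreal (real N * c * (2 * r)) \<le> ennreal v"
    using nn_integral_mono[of lebesgue "G N" f] G_le by (simp add: G_integral v)
  then have "real N * c * (2 * r) \<le> v" using v c r by (simp add: ennreal_le_iff)
  moreover have "v < real N * (c * (2 * r))" using N c r by (simp add: field_simps)
  ultimately show False by (simp add: mult.assoc)
qed

(* Otherwise |m - g| > \<epsilon>/2 on infinitely many disjoint intervals of a fixed length,
   and the entropy density exceeds (\<epsilon>/2)^2/4 there. *)
lemma finite_entropy_far_convergence:
  fixes m g :: "real \<Rightarrow> real"
  assumes fin: "(\<integral>\<^sup>+ x. e2ennreal (bern_ent (m x) (g x)) \<partial>lebesgue) < \<infinity>"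
    and m01: "\<And>x. 0 < m x \<and> m x < 1"
    and g_const: "\<And>x z. Rf + \<bar>z - x\<bar> \<le> \<bar>x\<bar> \<Longrightarrow> g z = g x"
    and g01: "\<And>x. Rf \<le> \<bar>x\<bar> \<Longrightarrow> 0 < g x \<and> g x < 1"
    and lip: "\<And>x z. Rf \<le> \<bar>x\<bar> \<Longrightarrow> \<bar>z - x\<bar> \<le> 1 \<Longrightarrow> \<bar>m z - m x\<bar> \<le> C * \<bar>z - x\<bar>"
    and eps: "0 < \<epsilon>"
  shows "\<exists>R. \<forall>x. R \<le> \<bar>x\<bar> \<longrightarrow> \<bar>m x - g x\<bar> \<le> \<epsilon>"
proof (rule ccontr)
  assume "\<not> ?thesis"
  then have far: "\<And>R. \<exists>x. R \<le> \<bar>x\<bar> \<and> \<epsilon> < \<bar>m x - g x\<bar>" by (auto simp: not_le)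
  obtain p :: "nat \<Rightarrow> real" where p: "\<forall>k. \<epsilon> < \<bar>m (p k) - g (p k)\<bar> \<and> Rf + 1 \<le> \<bar>p k\<bar>"
    and sep: "\<forall>j k. j \<noteq> k \<longrightarrow> 3 \<le> \<bar>p j - p k\<bar>"
    using separated_far_sequence[OF far, where R = "Rf + 1" and d = 3] by blast
  define C' where "C' = \<bar>C\<bar> + 1"
  define r where "r = min 1 (\<epsilon> / (2 * C'))"
  define c where "c = (\<epsilon>/2)^2/4"
  have C': "0 < C'" by (simp add: C'_def)
  have r: "0 < r" "r \<le> 1" "C' * r \<le> \<epsilon>/2" using eps C'
    by (auto simp: r_def min_def field_simps)
  have bump: "ennreal c \<le> e2ennreal (bern_ent (m z) (g z))" if z: "z \<in> {p k - r..p k + r}" for k z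
  proof -
    have zx: "\<bar>z - p k\<bar> \<le> r" using z by auto
    then have "g z = g (p k)" "0 < g z \<and> g z < 1"
      using g_const[where x = "p k" and z = z] g01[of "p k"] p[rule_format, of k] r by auto
    have "C * \<bar>z - p k\<bar> \<le> C' * r"
      using zx r(1) by (intro mult_mono) (auto simp: C'_def)
    moreover have "\<bar>m z - m (p k)\<bar> \<le> C * \<bar>z - p k\<bar>"
      using lip[where x = "p k" and z = z] p[rule_format, of k] zx r(2) by simp
    ultimately have "\<bar>m z - m (p k)\<bar> \<le> \<epsilon>/2" using r(3) by linarith
    then have d: "\<epsilon>/2 \<le> \<bar>m z - g z\<bar>" using p[rule_format, of k] \<open>g z = g (p k)\<close> by linarith
    have "c \<le> (m z - g z)^2/4"
      using power_mono[OF d, of 2] eps by (simp add: c_def power2_abs)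
    also have "ennreal \<dots> \<le> e2ennreal (bern_ent (m z) (g z))"
      using bern_ent_lower[of "m z" "g z"] m01[of z] \<open>0 < g z \<and> g z < 1\<close> by simp
    finally show ?thesis by (simp add: ennreal_leI)
  qed
  have "(\<integral>\<^sup>+ x. e2ennreal (bern_ent (m x) (g x)) \<partial>lebesgue) = \<infinity>"
  proof (rule nn_integral_disjoint_bumps_infinite[OF _ r(1) _ bump])
    show "0 < c" using eps by (simp add: c_def)
    show "2 * r < \<bar>p j - p k\<bar>" if "j \<noteq> k" for j k using sep[rule_format, OF that] r by simp
  qed
  with fin show False by simp
qed

(* Two facts about functions of one real variable: a derivative only depends on the values
   on an open neighbourhood, and a function with values in [0,1] whose third derivative is
   bounded by M near x has first derivative at most 1 + M at x (Taylor expansion of order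
   two at x +- 1). *)

lemma deriv_eq_on_open:
  fixes f g :: "real \<Rightarrow> real"
  assumes "(g has_real_derivative D) (at x)" "open S" "x \<in> S" "\<And>y. y \<in> S \<Longrightarrow> f y = g y"
  shows "deriv f x = D"
proof -
  have "(f has_real_derivative D) (at x)"
    using has_field_derivative_transform_within_open[OF assms(1-3)] assms(4) by metis
  then show ?thesis by (rule DERIV_imp_deriv)
qed

lemma derivative_bound_from_third:
  fixes f df ddf dddf :: "real \<Rightarrow> real"
  assumes d0: "\<And>y. (f has_real_derivative df y) (at y)"
    and d1: "\<And>y. (df has_real_derivative ddf y) (at y)"
    and d2: "\<And>y. (ddf has_real_derivative dddf y) (at y)"
    and b3: "\<And>y. x - 1 \<le> y \<Longrightarrow> y \<le> x + 1 \<Longrightarrow> \<bar>dddf y\<bar> \<le> M"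
    and b0: "\<And>y. 0 \<le> f y \<and> f y \<le> 1"
  shows "\<bar>df x\<bar> \<le> 1 + M"
proof -
  define dd where "dd = (\<lambda>m::nat. if m = 0 then f else if m = 1 then df else if m = 2 then ddf else dddf)"
  have D: "\<forall>m t. m < 3 \<and> x - 1 \<le> t \<and> t \<le> x + 1 \<longrightarrow> (dd m has_real_derivative dd (Suc m) t) (at t)"
    using d0 d1 d2 by (auto simp: dd_def less_Suc_eq numeral_3_eq_3)
  obtain t1 where t1: "x < t1" "t1 < x + 1"
    "f (x+1) = (\<Sum>m<3. dd m x / fact m * (x + 1 - x) ^ m) + dd 3 t1 / fact 3 * (x + 1 - x) ^ 3"
    using Taylor[of 3 dd f "x-1" "x+1" x "x+1"] D by (auto simp: dd_def)
  obtain t2 where t2: "x - 1 < t2" "t2 < x"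
    "f (x-1) = (\<Sum>m<3. dd m x / fact m * (x - 1 - x) ^ m) + dd 3 t2 / fact 3 * (x - 1 - x) ^ 3"
    using Taylor[of 3 dd f "x-1" "x+1" x "x-1"] D by (auto simp: dd_def)
  have e1: "f (x+1) = f x + df x + ddf x / 2 + dddf t1 / 6"
    using t1(3) by (simp add: dd_def numeral_3_eq_3 fact_numeral)
  have e2: "f (x-1) = f x - df x + ddf x / 2 - dddf t2 / 6"
    using t2(3) by (simp add: dd_def numeral_3_eq_3 fact_numeral)
  have "\<bar>dddf t1\<bar> \<le> M" "\<bar>dddf t2\<bar> \<le> M" using b3 t1 t2 by auto
  moreover have "0 \<le> f (x+1)" "f (x+1) \<le> 1" "0 \<le> f (x-1)" "f (x-1) \<le> 1" using b0 by auto
  ultimately show ?thesis using e1 e2 by (simp add: abs_le_iff)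
qed

lemma heat_equation_far:
  assumes H: "compact_support_on (dom_T T) Hx"
    and eq: "\<forall>p\<in>dom_T T. pt T \<mu> p = 1/2 * px (px \<mu>) p - px (\<lambda>q. Hx q * \<mu> q * (1 - \<mu> q)) p"
  shows "\<exists>B. \<forall>t\<in>{0..T}. \<forall>x. B < \<bar>x\<bar> \<longrightarrow> pt T \<mu> (t, x) = px (px \<mu>) (t, x) / 2"
proof -
  obtain K where K: "compact K" "\<forall>p\<in>dom_T T - K. Hx p = 0"
    using H unfolding compact_support_on_def by blast
  obtain B where B: "\<forall>p\<in>K. norm p \<le> B"
    using compact_imp_bounded[OF K(1)] bounded_iff by blast
  have open_far: "open {y::real. B < \<bar>y\<bar>}"
    by (auto intro!: open_Collect_less continuous_intros)
  have Hx0: "Hx (t, x) = 0" if "t \<in> {0..T}" "B < \<bar>x\<bar>" for t x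
  proof -
    have "\<bar>x\<bar> \<le> norm (t, x)"
      using real_sqrt_sum_squares_ge2[of t "\<bar>x\<bar>"] by (simp add: norm_Pair)
    then have "(t, x) \<notin> K" using B that by force
    moreover have "(t, x) \<in> dom_T T" using that by (simp add: dom_T_def)
    ultimately show ?thesis using K by blast
  qed
  have "pt T \<mu> (t, x) = px (px \<mu>) (t, x) / 2" if t: "t \<in> {0..T}" and x: "B < \<bar>x\<bar>" for t x
  proof -
    have "px (\<lambda>q. Hx q * \<mu> q * (1 - \<mu> q)) (t, x)
        = deriv (\<lambda>y. Hx (t, y) * \<mu> (t, y) * (1 - \<mu> (t, y))) x"
      by (simp add: px_def)
    also have "\<dots> = 0"
      by (rule deriv_eq_on_open[of "\<lambda>_. 0" 0 x "{y. B < \<bar>y\<bar>}"]) (use open_far x Hx0 t in auto)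
    finally show ?thesis using eq t by (auto simp: dom_T_def)
  qed
  then show ?thesis by blast
qed

(* Where the heat equation holds, mu_xxx = 2 (mu_t)_x, so property (iv) bounds mu_xxx. *)
lemma third_derivative_bound_far:
  assumes mu: "smooth_on (dom_T T) \<mu>"
    and heat: "\<forall>t\<in>{0..T}. \<forall>x. B < \<bar>x\<bar> \<longrightarrow> pt T \<mu> (t, x) = px (px \<mu>) (t, x) / 2"
    and bdd: "bounded (px (pt T \<mu>) ` dom_T T)"
  shows "\<exists>M. \<forall>t\<in>{0..T}. \<forall>x. B < \<bar>x\<bar> \<longrightarrow> \<bar>px (px (px \<mu>)) (t, x)\<bar> \<le> M"
proof -
  obtain Bd where Bd: "\<forall>z\<in>px (pt T \<mu>) ` dom_T T. norm z \<le> Bd"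
    using bdd bounded_iff by blast
  have "\<bar>px (px (px \<mu>)) (t, x)\<bar> \<le> 2 * Bd" if t: "t \<in> {0..T}" and x: "B < \<bar>x\<bar>" for t x
  proof -
    have "px (pt T \<mu>) (t, x) = deriv (\<lambda>y. pt T \<mu> (t, y)) x" by (simp add: px_def)
    also have "\<dots> = px (px (px \<mu>)) (t, x) / 2"
    proof (rule deriv_eq_on_open[of "\<lambda>y. px (px \<mu>) (t, y) / 2" _ x "{y. B < \<bar>y\<bar>}"])
      show "((\<lambda>y. px (px \<mu>) (t, y) / 2) has_real_derivative px (px (px \<mu>)) (t, x) / 2) (at x)"
        using has_px_derivative[OF smooth_on_px[OF smooth_on_px[OF mu]] t] by (rule DERIV_cdivide)
      show "pt T \<mu> (t, y) = px (px \<mu>) (t, y) / 2" if "y \<in> {y. B < \<bar>y\<bar>}" for y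
        using heat t that by auto
    qed (use x in \<open>auto intro!: open_Collect_less continuous_intros\<close>)
    finally have "px (pt T \<mu>) (t, x) = px (px (px \<mu>)) (t, x) / 2" .
    moreover have "(t, x) \<in> dom_T T" using t by (simp add: dom_T_def)
    ultimately show ?thesis using Bd by force
  qed
  then show ?thesis by blast
qed

lemma initial_lipschitz_far:
  assumes T: "0 \<le> T" and mu: "smooth_on (dom_T T) \<mu>"
    and mu01: "\<And>y. 0 \<le> \<mu> (0, y) \<and> \<mu> (0, y) \<le> 1"
    and third: "\<And>x. B < \<bar>x\<bar> \<Longrightarrow> \<bar>px (px (px \<mu>)) (0, x)\<bar> \<le> M"
    and x: "B + 3 \<le> \<bar>x\<bar>" and zx: "\<bar>z - x\<bar> \<le> 1"
  shows "\<bar>\<mu> (0, z) - \<mu> (0, x)\<bar> \<le> (1 + M) * \<bar>z - x\<bar>"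
proof -
  have T0: "0 \<in> {0..T}" using T by simp
  have grad: "\<bar>px \<mu> (0, w)\<bar> \<le> 1 + M" if w: "B + 2 \<le> \<bar>w\<bar>" for w
  proof (rule derivative_bound_from_third[where f = "\<lambda>y. \<mu> (0, y)" and df = "\<lambda>y. px \<mu> (0, y)"
        and ddf = "\<lambda>y. px (px \<mu>) (0, y)" and dddf = "\<lambda>y. px (px (px \<mu>)) (0, y)"])
    show "((\<lambda>y. \<mu> (0, y)) has_real_derivative px \<mu> (0, y)) (at y)" for y
      by (rule has_px_derivative[OF mu T0])
    show "((\<lambda>y. px \<mu> (0, y)) has_real_derivative px (px \<mu>) (0, y)) (at y)" for y
      by (rule has_px_derivative[OF smooth_on_px[OF mu] T0])
    show "((\<lambda>y. px (px \<mu>) (0, y)) has_real_derivative px (px (px \<mu>)) (0, y)) (at y)" for y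
      by (rule has_px_derivative[OF smooth_on_px[OF smooth_on_px[OF mu]] T0])
    show "\<bar>px (px (px \<mu>)) (0, y)\<bar> \<le> M" if "w - 1 \<le> y" "y \<le> w + 1" for y
      using that w by (intro third) arith
  qed (rule mu01)
  have far_segment: "B + 2 \<le> \<bar>w\<bar>" if "w \<in> closed_segment x z" for w
  proof -
    have "\<bar>w - x\<bar> \<le> \<bar>z - x\<bar>" using segment_bound1[OF that] by simp
    then show ?thesis using x zx abs_triangle_ineq2[of x w] abs_minus_commute[of w x] by linarith
  qed
  have "norm (\<mu> (0, z) - \<mu> (0, x)) \<le> (1 + M) * norm (z - x)"
  proof (rule field_differentiable_bound[where S = "closed_segment x z" and f' = "\<lambda>w. px \<mu> (0, w)"])
    show "((\<lambda>y. \<mu> (0, y)) has_field_derivative px \<mu> (0, w)) (at w within closed_segment x z)" for w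
      by (rule has_field_derivative_at_within[OF has_px_derivative[OF mu T0]])
  qed (use grad far_segment in auto)
  then show ?thesis by simp
qed

lemma profile_far:
  assumes gamma: "\<gamma> \<in> M1_prof \<rho>l \<rho>r" and rho: "0 < \<rho>l" "\<rho>l < 1" "0 < \<rho>r" "\<rho>r < 1"
  shows "\<exists>R0. (\<forall>x z. R0 + \<bar>z - x\<bar> \<le> \<bar>x\<bar> \<longrightarrow> \<gamma> z = \<gamma> x) \<and> (\<forall>x. R0 \<le> \<bar>x\<bar> \<longrightarrow> 0 < \<gamma> x \<and> \<gamma> x < 1)"
proof -
  obtain xl xr where left: "\<And>x. x \<le> xl \<Longrightarrow> \<gamma> x = \<rho>l" and right: "\<And>x. xr \<le> x \<Longrightarrow> \<gamma> x = \<rho>r"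
    using gamma unfolding M1_prof_def by blast
  define R0 where "R0 = \<bar>xl\<bar> + \<bar>xr\<bar>"
  have side: "(xr \<le> x \<and> xr \<le> z) \<or> (x \<le> xl \<and> z \<le> xl)" if "R0 + \<bar>z - x\<bar> \<le> \<bar>x\<bar>" for x z
  proof -
    have facts: "xr \<le> \<bar>xr\<bar>" "- xl \<le> \<bar>xl\<bar>" "0 \<le> \<bar>xl\<bar>" "0 \<le> \<bar>xr\<bar>"
      "x - z \<le> \<bar>z - x\<bar>" "z - x \<le> \<bar>z - x\<bar>" by auto
    show ?thesis
    proof (cases "0 \<le> x")
      case True
      then have "\<bar>x\<bar> = x" by simp
      then show ?thesis using that facts unfolding R0_def by linarith
    next
      case False
      then have "\<bar>x\<bar> = - x" by simp
      then show ?thesis using that facts unfolding R0_def by linarith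
    qed
  qed
  have "\<gamma> z = \<gamma> x" if "R0 + \<bar>z - x\<bar> \<le> \<bar>x\<bar>" for x z
    using side[OF that] left right by auto
  moreover have "0 < \<gamma> x \<and> \<gamma> x < 1" if "R0 \<le> \<bar>x\<bar>" for x
    using side[of x x] that left right rho by auto
  ultimately show ?thesis by blast
qed

(* At a far point y the barrier estimate on the window [y-L, y+L] is applied to mu - g(y). *)
lemma heat_far_uniform:
  assumes T: "0 < T" and mu: "smooth_on (dom_T T) \<mu>"
    and mu01: "\<And>t x. t \<in> {0..T} \<Longrightarrow> 0 \<le> \<mu> (t, x) \<and> \<mu> (t, x) \<le> 1"
    and g01: "\<And>x. 0 \<le> g x \<and> g x \<le> 1"
    and heat: "\<forall>t\<in>{0..T}. \<forall>x. B < \<bar>x\<bar> \<longrightarrow> pt T \<mu> (t, x) = px (px \<mu>) (t, x) / 2"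
    and g_const: "\<And>x z. Rf + \<bar>z - x\<bar> \<le> \<bar>x\<bar> \<Longrightarrow> g z = g x"
    and init: "\<And>e. 0 < e \<Longrightarrow> \<exists>R. \<forall>x. R \<le> \<bar>x\<bar> \<longrightarrow> \<bar>\<mu> (0, x) - g x\<bar> \<le> e"
    and e: "0 < e"
  shows "\<exists>R. \<forall>y. R \<le> \<bar>y\<bar> \<longrightarrow> (\<forall>t\<in>{0..T}. \<bar>\<mu> (t, y) - g y\<bar> \<le> e)"
proof -
  obtain R1 where R1: "\<forall>x. R1 \<le> \<bar>x\<bar> \<longrightarrow> \<bar>\<mu> (0, x) - g x\<bar> \<le> e/2"
    using init[of "e/2"] e by auto
  define L where "L = \<bar>T/2 + ln (4/e)\<bar> + 1"
  have L: "0 < L" by (simp add: L_def)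
  have L_small: "2 * exp (T/2) / exp L \<le> e/2"
  proof -
    have "exp (T/2 + ln (4/e)) \<le> exp L" by (simp add: L_def)
    then have "exp (T/2) * (4/e) \<le> exp L" using e by (simp add: exp_add)
    then show ?thesis using e by (simp add: field_simps)
  qed
  have "\<bar>\<mu> (t, y) - g y\<bar> \<le> e"
    if y: "\<bar>R1\<bar> + \<bar>Rf\<bar> + \<bar>B\<bar> + L + 1 \<le> \<bar>y\<bar>" and t: "t \<in> {0..T}" for y t
  proof -
    have window: "R1 \<le> \<bar>x\<bar> \<and> B < \<bar>x\<bar> \<and> g x = g y" if "x \<in> {y-L..y+L}" for x
    proof -
      have xy: "\<bar>x - y\<bar> \<le> L" using that by auto
      then have "\<bar>y\<bar> - L \<le> \<bar>x\<bar>" using abs_triangle_ineq2[of y x] abs_minus_commute[of x y] by linarith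
      then have "R1 \<le> \<bar>x\<bar>" "B < \<bar>x\<bar>"
        using y abs_ge_self[of R1] abs_ge_self[of B] abs_ge_zero[of Rf] by linarith+
      moreover have "g x = g y"
        using g_const[where x = y and z = x] xy y abs_ge_self[of Rf] abs_ge_zero[of R1] abs_ge_zero[of B]
        by linarith
      ultimately show ?thesis by blast
    qed
    have sub: "{0..T} \<times> {y-L..y+L} \<subseteq> dom_T T" by (auto simp: dom_T_def)
    have "\<bar>\<mu> (t, y) - g y\<bar> \<le> e/2 + 2 * exp (T/2) / exp L"
    proof (rule heat_barrier_estimate_abs[where w = "\<lambda>p. \<mu> p - g y" and wt = "pt T \<mu>"
          and wx = "px \<mu>" and wxx = "px (px \<mu>)", OF T L _ _ _ _ _ _ _ t])
      show "continuous_on ({0..T} \<times> {y-L..y+L}) (\<lambda>p. \<mu> p - g y)"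
        by (intro continuous_intros continuous_on_subset[OF smooth_on_continuous[OF mu] sub])
      show "((\<lambda>s. \<mu> (s, x) - g y) has_real_derivative pt T \<mu> (t', x)) (at t' within {0..T})"
        if "t' \<in> {0..T}" for t' x
        using DERIV_diff[OF has_pt_derivative[OF T mu that] DERIV_const[of "g y"]] by simp
      show "((\<lambda>z. \<mu> (t', z) - g y) has_real_derivative px \<mu> (t', x)) (at x)"
        if "t' \<in> {0..T}" for t' x
        using DERIV_diff[OF has_px_derivative[OF mu that] DERIV_const[of "g y"]] by simp
      show "((\<lambda>z. px \<mu> (t', z)) has_real_derivative px (px \<mu>) (t', x)) (at x)"
        if "t' \<in> {0..T}" for t' x
        by (rule has_px_derivative[OF smooth_on_px[OF mu] that])
      show "pt T \<mu> (t', x) = px (px \<mu>) (t', x) / 2" if "t' \<in> {0..T}" "x \<in> {y-L<..<y+L}" for t' x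
        using heat window[of x] that by auto
      show "\<bar>\<mu> (t', x) - g y\<bar> \<le> 1" if "t' \<in> {0..T}" for t' x
        using mu01[OF that, of x] g01[of y] by (simp add: abs_le_iff)
      show "\<bar>\<mu> (0, x) - g y\<bar> \<le> e/2" if "x \<in> {y-L..y+L}" for x
        using R1 window[OF that] by auto
    qed
    with L_small show ?thesis by linarith
  qed
  then show ?thesis by blast
qed

lemma sup_abs_tendsto_zero_at_infinity:
  fixes f :: "'a \<Rightarrow> real \<Rightarrow> real"
  assumes A: "A \<noteq> {}"
    and small: "\<And>e. 0 < e \<Longrightarrow> \<exists>R. \<forall>y. R \<le> \<bar>y\<bar> \<longrightarrow> (\<forall>t\<in>A. \<bar>f t y\<bar> \<le> e)"
  shows "((\<lambda>y. SUP t\<in>A. \<bar>f t y\<bar>) \<longlongrightarrow> 0) at_infinity"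
  unfolding tendsto_iff eventually_at_infinity
proof (intro allI impI)
  fix e :: real
  assume e: "0 < e"
  obtain R where R: "\<forall>y. R \<le> \<bar>y\<bar> \<longrightarrow> (\<forall>t\<in>A. \<bar>f t y\<bar> \<le> e/2)"
    using small[of "e/2"] e by auto
  obtain a where a: "a \<in> A" using A by blast
  show "\<exists>b. \<forall>y. b \<le> norm y \<longrightarrow> dist (SUP t\<in>A. \<bar>f t y\<bar>) 0 < e"
  proof (intro exI allI impI)
    fix y :: real
    assume "R \<le> norm y"
    then have bound: "\<forall>t\<in>A. \<bar>f t y\<bar> \<le> e/2" using R by simp
    have upper: "(SUP t\<in>A. \<bar>f t y\<bar>) \<le> e/2"
      using bound A by (intro cSUP_least) auto
    have "bdd_above ((\<lambda>t. \<bar>f t y\<bar>) ` A)"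
      using bound by (intro bdd_aboveI2[of _ _ "e/2"]) auto
    then have "\<bar>f a y\<bar> \<le> (SUP t\<in>A. \<bar>f t y\<bar>)" by (rule cSUP_upper[OF a])
    then have "0 \<le> (SUP t\<in>A. \<bar>f t y\<bar>)" by (meson abs_ge_zero order.trans)
    with upper e show "dist (SUP t\<in>A. \<bar>f t y\<bar>) 0 < e" by (simp add: dist_real_def)
  qed
qed

lemma density_strictly_inside:
  fixes \<mu> :: "real \<times> real \<Rightarrow> real"
  assumes "\<exists>\<delta>. 0 < \<delta> \<and> \<delta> < 1 \<and> (\<forall>p\<in>dom_T T. \<delta> \<le> \<mu> p \<and> \<mu> p \<le> 1 - \<delta>)"
    and "t \<in> {0..T}"
  shows "0 < \<mu> (t, x) \<and> \<mu> (t, x) < 1"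
proof -
  obtain \<delta> where \<delta>: "0 < \<delta>" "\<delta> < 1" "\<forall>p\<in>dom_T T. \<delta> \<le> \<mu> p \<and> \<mu> p \<le> 1 - \<delta>"
    using assms(1) by blast
  have "(t, x) \<in> dom_T T" using assms(2) by (simp add: dom_T_def)
  then show ?thesis using \<delta> by fastforce
qed

lemma initial_far_convergence:
  assumes T: "0 \<le> T" and mu: "smooth_on (dom_T T) \<mu>"
    and mu01: "\<And>x. 0 < \<mu> (0, x) \<and> \<mu> (0, x) < 1"
    and entropy: "rel_entropy (\<lambda>x. \<mu> (0, x)) \<gamma> < \<infinity>"
    and third: "\<forall>t\<in>{0..T}. \<forall>x. B < \<bar>x\<bar> \<longrightarrow> \<bar>px (px (px \<mu>)) (t, x)\<bar> \<le> M"
    and g_const: "\<forall>x z. R0 + \<bar>z - x\<bar> \<le> \<bar>x\<bar> \<longrightarrow> \<gamma> z = \<gamma> x"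
    and g01: "\<forall>x. R0 \<le> \<bar>x\<bar> \<longrightarrow> 0 < \<gamma> x \<and> \<gamma> x < 1"
    and e: "0 < e"
  shows "\<exists>R. \<forall>x. R \<le> \<bar>x\<bar> \<longrightarrow> \<bar>\<mu> (0, x) - \<gamma> x\<bar> \<le> e"
proof -
  define R where "R = \<bar>R0\<bar> + \<bar>B\<bar> + 3"
  have mu_le: "0 \<le> \<mu> (0, y) \<and> \<mu> (0, y) \<le> 1" for y
    using mu01[of y] by linarith
  show ?thesis
  proof (rule finite_entropy_far_convergence[where Rf = R and C = "1 + M", OF _ mu01 _ _ _ e])
    show "(\<integral>\<^sup>+ x. e2ennreal (bern_ent (\<mu> (0, x)) (\<gamma> x)) \<partial>lebesgue) < \<infinity>"
      using entropy by (simp add: rel_entropy_def)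
    show "\<bar>\<mu> (0, z) - \<mu> (0, x)\<bar> \<le> (1 + M) * \<bar>z - x\<bar>" if "R \<le> \<bar>x\<bar>" "\<bar>z - x\<bar> \<le> 1" for x z
      using that T mu_le third
      by (intro initial_lipschitz_far[OF T mu]) (auto simp: R_def)
  qed (use g_const g01 in \<open>auto simp: R_def\<close>)
qed

theorem lemma2p2:
  fixes T \<rho>l \<rho>r :: real
    and \<gamma> :: "real \<Rightarrow> real"
    and \<mu> :: "real \<times> real \<Rightarrow> real"
    and Hx :: "real \<times> real \<Rightarrow> real"
  assumes T_pos: "0 < T"
    and rho: "0 < \<rho>l" "\<rho>l < 1" "0 < \<rho>r" "\<rho>r < 1"
    and gamma: "\<gamma> \<in> M1_prof \<rho>l \<rho>r"
    and entropy: "rel_entropy (\<lambda>x. \<mu> (0, x)) \<gamma> < \<infinity>"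
    and rate: "I0 T \<mu> < \<infinity>"
    and prop_i: "\<exists>\<delta>. 0 < \<delta> \<and> \<delta> < 1 \<and> (\<forall>p\<in>dom_T T. \<delta> \<le> \<mu> p \<and> \<mu> p \<le> 1 - \<delta>)"
    and prop_ii: "smooth_on (dom_T T) \<mu>"
    and prop_iii_H: "smooth_on (dom_T T) Hx" "compact_support_on (dom_T T) Hx"
    and prop_iii: "\<forall>p\<in>dom_T T. pt T \<mu> p
                     = 1/2 * px (px \<mu>) p - px (\<lambda>q. Hx q * \<mu> q * (1 - \<mu> q)) p"
    and prop_iv: "\<forall>k l. 1 \<le> k \<longrightarrow> 1 \<le> l \<longrightarrow> bounded (((px ^^ k) ((pt T ^^ l) \<mu>)) ` dom_T T)"
  shows "((\<lambda>y. SUP t\<in>{0..T}. \<bar>\<mu> (t, y) - \<gamma> y\<bar>) \<longlongrightarrow> 0) at_infinity"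
proof -
  have T0: "0 \<in> {0..T}" using T_pos by simp
  have mu01: "0 < \<mu> (t, x) \<and> \<mu> (t, x) < 1" if "t \<in> {0..T}" for t x
    by (rule density_strictly_inside[OF prop_i that])
  have gamma01: "0 \<le> \<gamma> x \<and> \<gamma> x \<le> 1" for x
    using gamma unfolding M1_prof_def M1_def by blast
  obtain B where heat: "\<forall>t\<in>{0..T}. \<forall>x. B < \<bar>x\<bar> \<longrightarrow> pt T \<mu> (t, x) = px (px \<mu>) (t, x) / 2"
    using heat_equation_far[OF prop_iii_H(2) prop_iii] by blast
  obtain M where M: "\<forall>t\<in>{0..T}. \<forall>x. B < \<bar>x\<bar> \<longrightarrow> \<bar>px (px (px \<mu>)) (t, x)\<bar> \<le> M"
    using third_derivative_bound_far[OF prop_ii heat] prop_iv[rule_format, of 1 1] by auto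
  obtain R0 where R0_const: "\<forall>x z. R0 + \<bar>z - x\<bar> \<le> \<bar>x\<bar> \<longrightarrow> \<gamma> z = \<gamma> x"
    and R0_range: "\<forall>x. R0 \<le> \<bar>x\<bar> \<longrightarrow> 0 < \<gamma> x \<and> \<gamma> x < 1"
    using profile_far[OF gamma rho] by blast
  have initial: "\<exists>R. \<forall>x. R \<le> \<bar>x\<bar> \<longrightarrow> \<bar>\<mu> (0, x) - \<gamma> x\<bar> \<le> e" if "0 < e" for e
    using initial_far_convergence[OF _ prop_ii mu01[OF T0] entropy M R0_const R0_range that] T_pos
    by simp
  show ?thesis
  proof (rule sup_abs_tendsto_zero_at_infinity)
    show "{0..T} \<noteq> {}" using T0 by blast
    show "\<exists>R. \<forall>y. R \<le> \<bar>y\<bar> \<longrightarrow> (\<forall>t\<in>{0..T}. \<bar>\<mu> (t, y) - \<gamma> y\<bar> \<le> e)" if "0 < e" for e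
      by (rule heat_far_uniform[OF T_pos prop_ii _ gamma01 heat _ initial that])
        (use mu01 R0_const in \<open>auto simp: less_imp_le\<close>)
  qed
qed

end
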